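(* Every MG-space is homeomorphic to a decomposition space of some locally Menger space.
   Context: A space $X$ is Menger if for each sequence $(\mathcal{U}_n)$ of open covers of $X$ there is a sequence $(\mathcal{V}_n)$ with each $\mathcal{V}_n$ a finite subset of $\mathcal{U}_n$ and $\bigcup_{n}\bigcup\mathcal{V}_n=X$. A space $X$ is locally Menger if for each $x\in X$ there exist an open set $U$ and a Menger subspace $Y$ of $X$ with $x\in U\subseteq Y$. A space $X$ is Menger generated (an MG-space) if a subset $U\subseteq X$ is open in $X$ whenever $U\cap M$ is open in $M$ for every Menger subspace $M$ of $X$. A decomposition of a space $X$ is a partition $\mathcal{D}$ of $X$; with the decomposition map $\varphi:X\to\mathcal{D}$ sending $x$ to the member of $\mathcal{D}$ containing $x$, $\mathcal{D}$ is topologized by declaring $\mathcal{U}\subseteq\mathcal{D}$ open iff $\varphi^{-1}(\mathcal{U})$ is open in $X$; this is the decomposition space. *)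

theory Defs
  imports "HOL-Analysis.Analysis" "HOL-Library.Disjoint_Sets"
begin

definition menger_space :: "'a topology \<Rightarrow> bool" where
  "menger_space X \<longleftrightarrow>
     (\<forall>\<U> :: nat \<Rightarrow> 'a set set.
        (\<forall>n. (\<forall>V\<in>\<U> n. openin X V) \<and> topspace X \<subseteq> \<Union>(\<U> n)) \<longrightarrow>
        (\<exists>\<V> :: nat \<Rightarrow> 'a set set. (\<forall>n. finite (\<V> n) \<and> \<V> n \<subseteq> \<U> n) \<and>
              topspace X \<subseteq> (\<Union>n. \<Union>(\<V> n))))"

definition menger_subspace :: "'a topology \<Rightarrow> 'a set \<Rightarrow> bool" where
  "menger_subspace X M \<longleftrightarrow> M \<subseteq> topspace X \<and> menger_space (subtopology X M)"

definition locally_menger :: "'a topology \<Rightarrow> bool" where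
  "locally_menger X \<longleftrightarrow>
     (\<forall>x\<in>topspace X. \<exists>U Y. openin X U \<and> menger_subspace X Y \<and> x \<in> U \<and> U \<subseteq> Y)"

definition menger_generated :: "'a topology \<Rightarrow> bool" where
  "menger_generated X \<longleftrightarrow>
     (\<forall>U. U \<subseteq> topspace X \<longrightarrow>
        (\<forall>M. menger_subspace X M \<longrightarrow> openin (subtopology X M) (U \<inter> M)) \<longrightarrow>
        openin X U)"

text \<open>Decomposition space of a partition D of the points of Y: a family of blocks
  is open iff the union of its members (its preimage under the decomposition map) is open.\<close>
definition decomposition_space :: "'a topology \<Rightarrow> 'a set set \<Rightarrow> 'a set topology" where
  "decomposition_space Y D = topology (\<lambda>\<U>. \<U> \<subseteq> D \<and> openin Y (\<Union>\<U>))"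

end

theory Submission
  imports Defs
begin

text \<open>Let \<open>\<M>\<close> be the family of Menger subspaces of \<open>X\<close> and \<open>Y\<close> the disjoint sum of its
  members. Each summand is an open Menger subspace of \<open>Y\<close>, so \<open>Y\<close> is locally Menger. Since
  singletons are Menger, the projection \<open>Y \<rightarrow> X\<close> is onto, and since \<open>X\<close> is Menger generated it
  is a quotient map. The target of a quotient map is homeomorphic to the decomposition space
  formed by its fibres.\<close>

lemma openin_decomposition_space:
  assumes "disjoint D"
  shows "openin (decomposition_space Y D) \<U> \<longleftrightarrow> \<U> \<subseteq> D \<and> openin Y (\<Union>\<U>)"
proof -
  have "\<Union>(S \<inter> T) = \<Union>S \<inter> \<Union>T" if "S \<subseteq> D" "T \<subseteq> D" for S T
    using assms that by (fastforce dest: disjointD)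
  moreover have "\<Union>(\<Union>K) = (\<Union>S\<in>K. \<Union>S)" for K :: "'a set set set"
    by blast
  ultimately have "istopology (\<lambda>\<U>. \<U> \<subseteq> D \<and> openin Y (\<Union>\<U>))"
    unfolding istopology_def by (auto simp: openin_Int intro: openin_Union)
  then show ?thesis
    by (simp add: decomposition_space_def)
qed

lemma topspace_decomposition_space:
  assumes "partition_on (topspace Y) D"
  shows "topspace (decomposition_space Y D) = D"
proof -
  have "openin (decomposition_space Y D) D"
    using assms by (simp add: openin_decomposition_space partition_on_def)
  then show ?thesis
    using openin_subset openin_decomposition_space[OF partition_onD2[OF assms]]
    by (metis openin_topspace subset_antisym)
qed

lemma partition_on_fibres:
  assumes "q ` topspace Y = S"
  shows "partition_on (topspace Y) ((\<lambda>x. {y \<in> topspace Y. q y = x}) ` S)"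
  using assms by (intro partition_onI) (auto simp: disjnt_def)

lemma homeomorphic_map_decomposition_space_fibres:
  fixes Y :: "'a topology" and X :: "'b topology" and q :: "'a \<Rightarrow> 'b"
  defines "fibre x \<equiv> {y \<in> topspace Y. q y = x}"
  assumes q: "quotient_map Y X q"
  shows "homeomorphic_map X (decomposition_space Y (fibre ` topspace X)) fibre"
proof -
  let ?Z = "decomposition_space Y (fibre ` topspace X)"
  have onto: "q ` topspace Y = topspace X"
    using q by (simp add: quotient_map_def)
  then have part: "partition_on (topspace Y) (fibre ` topspace X)"
    unfolding fibre_def by (rule partition_on_fibres)
  have inj: "inj_on fibre (topspace X)"
    using onto unfolding fibre_def inj_on_def by (metis (mono_tags, lifting) imageE mem_Collect_eq)
  have "openin X {x \<in> topspace X. fibre x \<in> \<U>} \<longleftrightarrow> openin ?Z \<U>"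
    if "\<U> \<subseteq> fibre ` topspace X" for \<U>
  proof -
    have "openin ?Z \<U> \<longleftrightarrow> openin Y (\<Union>\<U>)"
      using that by (simp add: openin_decomposition_space partition_onD2[OF part])
    also have "\<Union>\<U> = {y \<in> topspace Y. q y \<in> {x \<in> topspace X. fibre x \<in> \<U>}}"
      using that onto unfolding fibre_def by auto
    also have "openin Y \<dots> \<longleftrightarrow> openin X {x \<in> topspace X. fibre x \<in> \<U>}"
      using q[unfolded quotient_map_def] by (simp only: Collect_subset simp_thms)
    finally show ?thesis ..
  qed
  then have "quotient_map X ?Z fibre"
    by (simp add: quotient_map_def topspace_decomposition_space[OF part])
  with inj show ?thesis
    by (simp add: homeomorphic_map_def)
qed

definition coherent_with :: "'a topology \<Rightarrow> 'a set set \<Rightarrow> bool" where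
  "coherent_with X \<M> \<longleftrightarrow>
     (\<forall>U. U \<subseteq> topspace X \<longrightarrow> (\<forall>M\<in>\<M>. openin (subtopology X M) (U \<inter> M)) \<longrightarrow> openin X U)"

lemma menger_generated_coherent_with:
  "menger_generated X \<longleftrightarrow> coherent_with X (Collect (menger_subspace X))"
  by (simp add: menger_generated_def coherent_with_def)

lemma quotient_map_sum_topology_snd:
  assumes coherent: "coherent_with X \<M>" and cover: "\<Union>\<M> = topspace X"
  shows "quotient_map (sum_topology (subtopology X) \<M>) X snd"
  unfolding quotient_map_def
proof (intro conjI allI impI)
  have space: "topspace (sum_topology (subtopology X) \<M>) = Sigma \<M> (\<lambda>M. M)"
    unfolding topspace_sum_topology o_def topspace_subtopology
    using cover by (intro Sigma_cong) auto
  then show "snd ` topspace (sum_topology (subtopology X) \<M>) = topspace X"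
    using cover by (simp add: snd_image_Sigma)
  fix U assume U: "U \<subseteq> topspace X"
  have "{p \<in> topspace (sum_topology (subtopology X) \<M>). snd p \<in> U} = Sigma \<M> (\<lambda>M. U \<inter> M)"
    unfolding space by auto
  moreover have "(\<forall>M\<in>\<M>. openin (subtopology X M) (U \<inter> M)) \<longleftrightarrow> openin X U"
    using coherent U openin_subtopology_Int unfolding coherent_with_def by blast
  ultimately show "openin (sum_topology (subtopology X) \<M>) {p \<in> topspace (sum_topology (subtopology X) \<M>). snd p \<in> U}
      \<longleftrightarrow> openin X U"
    by (simp only: openin_disjoint_union)
qed

lemma menger_space_continuous_map_image:
  assumes X: "menger_space X" and f: "continuous_map X Y f" and fim: "f ` topspace X = topspace Y"
  shows "menger_space Y"
  unfolding menger_space_def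
proof (intro allI impI)
  fix \<U> :: "nat \<Rightarrow> _" assume \<U>: "\<forall>n. (\<forall>V\<in>\<U> n. openin Y V) \<and> topspace Y \<subseteq> \<Union>(\<U> n)"
  define preimage where "preimage V = {x \<in> topspace X. f x \<in> V}" for V
  have preimage_cover: "(\<forall>V\<in>preimage ` \<U> n. openin X V) \<and> topspace X \<subseteq> \<Union>(preimage ` \<U> n)" for n
  proof
    show "\<forall>V\<in>preimage ` \<U> n. openin X V"
      using \<U> f unfolding preimage_def by (auto intro: openin_continuous_map_preimage)
    show "topspace X \<subseteq> \<Union>(preimage ` \<U> n)"
    proof
      fix x assume x: "x \<in> topspace X"
      then obtain V where "V \<in> \<U> n" "f x \<in> V"
        using \<U> fim by blast
      with x show "x \<in> \<Union>(preimage ` \<U> n)"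
        unfolding preimage_def by blast
    qed
  qed
  have "\<exists>\<W>. (\<forall>n. finite (\<W> n) \<and> \<W> n \<subseteq> preimage ` \<U> n) \<and> topspace X \<subseteq> (\<Union>n. \<Union>(\<W> n))"
    using X preimage_cover unfolding menger_space_def by simp
  then obtain \<W> where \<W>: "\<forall>n. finite (\<W> n) \<and> \<W> n \<subseteq> preimage ` \<U> n"
    and \<W>_cover: "topspace X \<subseteq> (\<Union>n. \<Union>(\<W> n))"
    by blast
  have "\<exists>\<C>. \<C> \<subseteq> \<U> n \<and> finite \<C> \<and> \<W> n = preimage ` \<C>" for n
    using \<W> by (meson finite_subset_image)
  then obtain \<V> where \<V>: "\<And>n. \<V> n \<subseteq> \<U> n \<and> finite (\<V> n) \<and> \<W> n = preimage ` \<V> n"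
    by metis
  have "topspace Y \<subseteq> (\<Union>n. \<Union>(\<V> n))"
  proof
    fix y assume "y \<in> topspace Y"
    then obtain x where x: "x \<in> topspace X" "y = f x"
      using fim by blast
    then obtain n where "x \<in> \<Union>(\<W> n)"
      using \<W>_cover by blast
    then have "x \<in> \<Union>(preimage ` \<V> n)"
      using \<V> by simp
    with x show "y \<in> (\<Union>n. \<Union>(\<V> n))"
      unfolding preimage_def by blast
  qed
  with \<V> show "\<exists>\<V>. (\<forall>n. finite (\<V> n) \<and> \<V> n \<subseteq> \<U> n) \<and> topspace Y \<subseteq> (\<Union>n. \<Union>(\<V> n))"
    by blast
qed

lemma homeomorphic_menger_space:
  assumes "X homeomorphic_space Y"
  shows "menger_space X \<longleftrightarrow> menger_space Y"
  using assms homeomorphic_space_sym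
  by (metis homeomorphic_eq_everything_map homeomorphic_space menger_space_continuous_map_image)

lemma menger_subspace_singleton:
  assumes "x \<in> topspace X"
  shows "menger_subspace X {x}"
  unfolding menger_subspace_def menger_space_def
proof (intro conjI allI impI)
  show "{x} \<subseteq> topspace X"
    using assms by simp
  fix \<U> :: "nat \<Rightarrow> _"
  assume "\<forall>n. (\<forall>V\<in>\<U> n. openin (subtopology X {x}) V) \<and> topspace (subtopology X {x}) \<subseteq> \<Union>(\<U> n)"
  then obtain V where "V \<in> \<U> 0" "x \<in> V"
    using assms by auto
  then show "\<exists>\<V>. (\<forall>n. finite (\<V> n) \<and> \<V> n \<subseteq> \<U> n) \<and> topspace (subtopology X {x}) \<subseteq> (\<Union>n. \<Union>(\<V> n))"
    by (intro exI[of _ "\<lambda>n. if n = 0 then {V} else {}"]) auto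
qed

lemma Union_menger_subspaces: "\<Union>(Collect (menger_subspace X)) = topspace X"
proof (rule subset_antisym)
  show "\<Union>(Collect (menger_subspace X)) \<subseteq> topspace X"
    by (auto simp: menger_subspace_def)
  show "topspace X \<subseteq> \<Union>(Collect (menger_subspace X))"
  proof
    fix x assume "x \<in> topspace X"
    then have "{x} \<in> Collect (menger_subspace X)"
      by (simp add: menger_subspace_singleton)
    then show "x \<in> \<Union>(Collect (menger_subspace X))"
      by blast
  qed
qed

lemma locally_menger_sum_topology:
  assumes "\<forall>i\<in>I. menger_space (X i)"
  shows "locally_menger (sum_topology X I)"
  unfolding locally_menger_def
proof
  fix p assume "p \<in> topspace (sum_topology X I)"
  then obtain i x where p: "p = (i, x)" and i: "i \<in> I" and x: "x \<in> topspace (X i)"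
    by auto
  let ?U = "Pair i ` topspace (X i)"
  have U_open: "openin (sum_topology X I) ?U"
    using open_map_component_injection[OF i, of X] openin_topspace by (simp add: open_map_def)
  have "X i homeomorphic_space subtopology (sum_topology X I) ?U"
    using embedding_map_component_injection[OF i, of X] by (rule embedding_map_imp_homeomorphic_space)
  then have "menger_space (subtopology (sum_topology X I) ?U)"
    using assms i homeomorphic_menger_space by blast
  then have "menger_subspace (sum_topology X I) ?U"
    using openin_subset[OF U_open] by (simp add: menger_subspace_def)
  with U_open show "\<exists>U Y. openin (sum_topology X I) U \<and> menger_subspace (sum_topology X I) Y \<and> p \<in> U \<and> U \<subseteq> Y"
    using p x by blast
qed

theorem theorem4p24:
  fixes X :: "'a topology"
  assumes "menger_generated X"
  shows "\<exists>(Y :: ('a set \<times> 'a) topology) D.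
           locally_menger Y \<and> partition_on (topspace Y) D \<and>
           X homeomorphic_space decomposition_space Y D"
proof -
  let ?\<M> = "Collect (menger_subspace X)"
  define Y where "Y = sum_topology (subtopology X) ?\<M>"
  define fibre where "fibre x = {p \<in> topspace Y. snd p = x}" for x
  have "coherent_with X ?\<M>"
    using assms by (simp add: menger_generated_coherent_with)
  then have q: "quotient_map Y X snd"
    unfolding Y_def using Union_menger_subspaces[of X] by (rule quotient_map_sum_topology_snd)
  have "locally_menger Y"
    unfolding Y_def by (rule locally_menger_sum_topology) (simp add: menger_subspace_def)
  moreover have "partition_on (topspace Y) (fibre ` topspace X)"
    using q unfolding fibre_def by (intro partition_on_fibres) (simp add: quotient_map_def)
  moreover have "X homeomorphic_space decomposition_space Y (fibre ` topspace X)"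
    using homeomorphic_map_decomposition_space_fibres[OF q] unfolding fibre_def
    by (rule homeomorphic_map_imp_homeomorphic_space)
  ultimately show ?thesis
    by blast
qed

end
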